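(* In the hierarchical partition construction described in the context, let $A$ be any set occurring in some partition $\mathcal S_j$, and let $a_1$ be the largest level $j$ with $A\in\mathcal S_j$. Then the number of sets $B\neq A$ for which there exists a level $j$ with $A,B\in\mathcal S_j$ and $A$ knows $B$ at level $j$, and such that $A$ is responsible for the pair (i.e. $a_1\le b_1$, where $b_1$ is the largest level with $B\in\mathcal S_{b_1}$), is at most $\lambda^{3+\eta}$.
   Context: Let $(V,d)$ be a finite metric space with $|V|\ge 2$ which is doubling with constant $\lambda$: for every $v\in V$ and $r>0$ the open ball $B_{2r}(v)=\{u:d(u,v)<2r\}$ is contained in the union of at most $\lambda$ open balls $B_r(w)$, $w\in V$. Fix an integer $\eta\ge2$ and a real $\tau$ with $1+\frac{1}{2^{\eta-1}-1}\le\tau\le 2^{\eta}$. For $L\subseteq V$ and $r>0$, a greedy partition of $L$ with parameter $r$ is obtained by: set $L_0=L$; while $L_i\ne\emptyset$ choose any $v_i\in L_i$, let $P_i=\{u\in L_i: d(u,v_i)<2^{-\eta-1}r\}$ with leader $v_i$, and set $L_{i+1}=L_i\setminus P_i$. Hierarchical partition construction: choose $r_0$ with $0<r_0<\min_{u\ne v}d(u,v)$ and put $r_j=\tau^j r_0$. Let $\mathcal S_0=\{\{v\}:v\in V\}$, the leader of $\{v\}$ being $v$. While $\mathcal S_j$ has more than one element: let $L_j$ be the set of leaders of the sets in $\mathcal S_j$, let $\mathcal S'_{j+1}$ be a greedy partition of $L_j$ with parameter $2r_{j+1}$, and let $\mathcal S_{j+1}$ consist, for each $P\in\mathcal S'_{j+1}$,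 of the set $\bigcup\{S\in\mathcal S_j:\mathrm{leader}(S)\in P\}$, whose leader is defined to be the leader of $P$. Each $\mathcal S_j$ is a partition of $V$ and $\mathcal S_j$ refines $\mathcal S_{j+1}$, so a set occurs in a contiguous range of levels. For $S,S'\in\mathcal S_j$, $S$ knows $S'$ (at level $j$) if there are $v\in S$, $u\in S'$ with $d(v,u)<r_j$. *)

theory Defs
  imports Complex_Main
begin

definition metric_on :: "'a set \<Rightarrow> ('a \<Rightarrow> 'a \<Rightarrow> real) \<Rightarrow> bool" where
  "metric_on V d \<longleftrightarrow>
     (\<forall>u\<in>V. \<forall>v\<in>V. d u v \<ge> 0 \<and> (d u v = 0 \<longleftrightarrow> u = v) \<and> d u v = d v u) \<and>
     (\<forall>u\<in>V. \<forall>v\<in>V. \<forall>w\<in>V. d u w \<le> d u v + d v w)"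

definition open_ball :: "'a set \<Rightarrow> ('a \<Rightarrow> 'a \<Rightarrow> real) \<Rightarrow> 'a \<Rightarrow> real \<Rightarrow> 'a set" where
  "open_ball V d v r = {u \<in> V. d u v < r}"

definition doubling :: "'a set \<Rightarrow> ('a \<Rightarrow> 'a \<Rightarrow> real) \<Rightarrow> real \<Rightarrow> bool" where
  "doubling V d lam \<longleftrightarrow>
     (\<forall>v\<in>V. \<forall>r>0. \<exists>W. W \<subseteq> V \<and> finite W \<and> real (card W) \<le> lam \<and>
        open_ball V d v (2 * r) \<subseteq> (\<Union>w\<in>W. open_ball V d w r))"

inductive greedy_partition ::
  "('a \<Rightarrow> 'a \<Rightarrow> real) \<Rightarrow> nat \<Rightarrow> real \<Rightarrow> 'a set \<Rightarrow> ('a \<times> 'a set) list \<Rightarrow> bool"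
  for d :: "'a \<Rightarrow> 'a \<Rightarrow> real" and eta :: nat and r :: real where
  gp_Nil: "greedy_partition d eta r {} []"
| gp_Cons: "\<lbrakk> v \<in> L; P = {u \<in> L. d u v < r / 2 ^ (eta + 1)};
              greedy_partition d eta r (L - P) ps \<rbrakk>
           \<Longrightarrow> greedy_partition d eta r L ((v, P) # ps)"

text \<open>Level j of the hierarchy is a set of pairs (leader, cluster).\<close>
definition clusters :: "(nat \<Rightarrow> ('a \<times> 'a set) set) \<Rightarrow> nat \<Rightarrow> 'a set set" where
  "clusters S j = snd ` S j"

definition radius :: "real \<Rightarrow> real \<Rightarrow> nat \<Rightarrow> real" where
  "radius tau r0 j = tau ^ j * r0"

text \<open>S is a run of the hierarchical partition construction that stops at level m
  (S 0, ..., S m are the constructed levels; S m is the first with one element).\<close>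
definition hierarchy ::
  "'a set \<Rightarrow> ('a \<Rightarrow> 'a \<Rightarrow> real) \<Rightarrow> nat \<Rightarrow> real \<Rightarrow> real \<Rightarrow>
   (nat \<Rightarrow> ('a \<times> 'a set) set) \<Rightarrow> nat \<Rightarrow> bool" where
  "hierarchy V d eta tau r0 S m \<longleftrightarrow>
     S 0 = (\<lambda>v. (v, {v})) ` V \<and>
     card (S m) = 1 \<and>
     (\<forall>j<m. card (S j) > 1 \<and>
        (\<exists>ps. greedy_partition d eta (2 * radius tau r0 (Suc j)) (fst ` S j) ps \<and>
              S (Suc j) = (\<lambda>(v, P). (v, \<Union>{C. \<exists>w. (w, C) \<in> S j \<and> w \<in> P})) ` set ps))"

definition knows ::
  "('a \<Rightarrow> 'a \<Rightarrow> real) \<Rightarrow> real \<Rightarrow> real \<Rightarrow> 'a set \<Rightarrow> 'a set \<Rightarrow> nat \<Rightarrow> bool" where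
  "knows d tau r0 A B j \<longleftrightarrow> (\<exists>v\<in>A. \<exists>u\<in>B. d v u < radius tau r0 j)"

definition top_level :: "(nat \<Rightarrow> ('a \<times> 'a set) set) \<Rightarrow> nat \<Rightarrow> 'a set \<Rightarrow> nat" where
  "top_level S m A = (GREATEST j. j \<le> m \<and> A \<in> clusters S j)"

end

theory Submission
  imports Defs
begin

(*
  Let a be the top level of A.  Every counted set B is, by the
  contiguity of the levels at which a set occurs, itself a cluster of level a,
  and since radii grow with the level it knows A already at level a.  Hence
  it suffices to bound the number of level-a clusters knowing A.  Their
  leaders lie within 2 r_a of the leader of A (each cluster has radius r_a/2
  around its leader) and are pairwise r_a/2^eta apart (greedy separation), so
  a packing argument in the doubling space bounds them by lam^(eta+2).
*)

lemma metric_on_zero: "metric_on V d \<Longrightarrow> x \<in> V \<Longrightarrow> d x x = 0"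
  unfolding metric_on_def by blast

lemma metric_on_sym: "metric_on V d \<Longrightarrow> x \<in> V \<Longrightarrow> y \<in> V \<Longrightarrow> d x y = d y x"
  unfolding metric_on_def by blast

lemma metric_on_triangle:
  "metric_on V d \<Longrightarrow> x \<in> V \<Longrightarrow> y \<in> V \<Longrightarrow> z \<in> V \<Longrightarrow> d x z \<le> d x y + d y z"
  unfolding metric_on_def by blast


lemma greedy_partition_part_subset:
  "greedy_partition d eta r L ps \<Longrightarrow> (w, Q) \<in> set ps \<Longrightarrow> w \<in> L \<and> Q \<subseteq> L"
  by (induction rule: greedy_partition.induct) auto

lemma greedy_partition_part_radius:
  "greedy_partition d eta r L ps \<Longrightarrow> (w, Q) \<in> set ps \<Longrightarrow> u \<in> Q \<Longrightarrow> d u w < r / 2 ^ (eta + 1)"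
  by (induction rule: greedy_partition.induct) auto

lemma greedy_partition_leader_in_part:
  "greedy_partition d eta r L ps \<Longrightarrow> (w, Q) \<in> set ps \<Longrightarrow> 0 < r \<Longrightarrow> d w w = 0 \<Longrightarrow> w \<in> Q"
  by (induction rule: greedy_partition.induct) auto

lemma greedy_partition_covers:
  "greedy_partition d eta r L ps \<Longrightarrow> u \<in> L \<Longrightarrow> \<exists>w Q. (w, Q) \<in> set ps \<and> u \<in> Q"
proof (induction rule: greedy_partition.induct)
  case (gp_Cons v L P ps)
  then show ?case by (cases "u \<in> P") auto
qed simp

lemma greedy_partition_disjoint:
  "greedy_partition d eta r L ps \<Longrightarrow> (w, Q) \<in> set ps \<Longrightarrow> (w', Q') \<in> set ps \<Longrightarrow> w \<noteq> w'
   \<Longrightarrow> Q \<inter> Q' = {}"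
proof (induction rule: greedy_partition.induct)
  case (gp_Cons v L P ps)
  have "Q'' \<subseteq> L - P" if "(w'', Q'') \<in> set ps" for w'' Q''
    using greedy_partition_part_subset[OF gp_Cons.hyps(3) that] by blast
  with gp_Cons show ?case by auto
qed simp

lemma greedy_partition_leaders_separated:
  "greedy_partition d eta r L ps \<Longrightarrow> (w, Q) \<in> set ps \<Longrightarrow> (w', Q') \<in> set ps \<Longrightarrow> w \<noteq> w'
   \<Longrightarrow> r / 2 ^ (eta + 1) \<le> d w w' \<or> r / 2 ^ (eta + 1) \<le> d w' w"
proof (induction rule: greedy_partition.induct)
  case (gp_Cons v L P ps)
  \<comment> \<open>a later leader was not captured by the part of v\<close>
  have "r / 2 ^ (eta + 1) \<le> d w'' v" if "(w'', Q'') \<in> set ps" for w'' Q''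
    using greedy_partition_part_subset[OF gp_Cons.hyps(3) that] gp_Cons.hyps(2) by auto
  with gp_Cons show ?case by auto
qed simp

lemma greedy_partition_leaders_unique:
  "greedy_partition d eta r L ps \<Longrightarrow> (w, Q) \<in> set ps \<Longrightarrow> (w, Q') \<in> set ps \<Longrightarrow> 0 < r
   \<Longrightarrow> d w w = 0 \<Longrightarrow> Q = Q'"
proof (induction rule: greedy_partition.induct)
  case (gp_Cons v L P ps)
  \<comment> \<open>v lies in its own part, hence cannot be a leader of the remainder\<close>
  have "(v, Q'') \<notin> set ps" if "d v v = 0" for Q''
    using greedy_partition_part_subset[OF gp_Cons.hyps(3)] gp_Cons.hyps(1,2) gp_Cons.prems that
    by fastforce
  with gp_Cons show ?case by auto
qed simp


lemma doubling_nonneg: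
  assumes "doubling V d lam" and "c \<in> V"
  shows "0 \<le> lam"
proof -
  obtain W :: "'a set" where "real (card W) \<le> lam"
    using assms unfolding doubling_def by (metis zero_less_one)
  then show ?thesis by linarith
qed

lemma doubling_ge_one:
  assumes met: "metric_on V d" and dbl: "doubling V d lam" and c: "c \<in> V"
  shows "1 \<le> lam"
proof -
  obtain W where W: "finite W" "real (card W) \<le> lam"
      "open_ball V d c (2 * 1) \<subseteq> (\<Union>w\<in>W. open_ball V d w 1)"
    using dbl c unfolding doubling_def by (metis zero_less_one)
  have "c \<in> open_ball V d c (2 * 1)"
    using c metric_on_zero[OF met c] unfolding open_ball_def by simp
  then have "W \<noteq> {}" using W(3) by blast
  then have "1 \<le> card W" using W(1) by (simp add: Suc_le_eq card_gt_0_iff)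
  then show ?thesis using W(2) by linarith
qed

lemma doubling_iterated_cover:
  assumes dbl: "doubling V d lam" and c: "c \<in> V"
  shows "rho > 0 \<Longrightarrow> \<exists>W. W \<subseteq> V \<and> finite W \<and> real (card W) \<le> lam ^ k \<and>
           open_ball V d c (2 ^ k * rho) \<subseteq> (\<Union>w\<in>W. open_ball V d w rho)"
proof (induction k arbitrary: rho)
  case 0
  then show ?case using c by (intro exI[of _ "{c}"]) auto
next
  case (Suc k)
  obtain W where W: "W \<subseteq> V" "finite W" "real (card W) \<le> lam ^ k"
    "open_ball V d c (2 ^ k * (2 * rho)) \<subseteq> (\<Union>w\<in>W. open_ball V d w (2 * rho))"
    using Suc.IH[of "2 * rho"] Suc.prems by auto
  have "\<forall>w\<in>W. \<exists>U. U \<subseteq> V \<and> finite U \<and> real (card U) \<le> lam \<and>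
        open_ball V d w (2 * rho) \<subseteq> (\<Union>u\<in>U. open_ball V d u rho)"
  proof
    fix w assume "w \<in> W"
    then show "\<exists>U. U \<subseteq> V \<and> finite U \<and> real (card U) \<le> lam \<and>
        open_ball V d w (2 * rho) \<subseteq> (\<Union>u\<in>U. open_ball V d u rho)"
      using dbl Suc.prems W(1) unfolding doubling_def by blast
  qed
  then obtain f where f: "\<forall>w\<in>W. f w \<subseteq> V \<and> finite (f w) \<and> real (card (f w)) \<le> lam \<and>
        open_ball V d w (2 * rho) \<subseteq> (\<Union>u\<in>f w. open_ball V d u rho)"
    by (rule bchoice[elim_format]) blast
  then have fV: "\<And>w. w \<in> W \<Longrightarrow> f w \<subseteq> V" and f_fin: "\<And>w. w \<in> W \<Longrightarrow> finite (f w)"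
    and f_card: "\<And>w. w \<in> W \<Longrightarrow> real (card (f w)) \<le> lam" by blast+
  define W' where "W' = (\<Union>w\<in>W. f w)"
  have "real (card W') \<le> real (\<Sum>w\<in>W. card (f w))"
    unfolding W'_def using card_UN_le[OF W(2), of f] by (simp only: of_nat_le_iff)
  also have "\<dots> = (\<Sum>w\<in>W. real (card (f w)))" by simp
  also have "\<dots> \<le> (\<Sum>w\<in>W. lam)" by (rule sum_mono) (rule f_card)
  also have "\<dots> = real (card W) * lam" by simp
  also have "\<dots> \<le> lam ^ k * lam"
    using W(3) doubling_nonneg[OF dbl c] by (rule mult_right_mono)
  finally have "real (card W') \<le> lam ^ Suc k" by (simp add: mult.commute)
  moreover have "open_ball V d c (2 ^ Suc k * rho) \<subseteq> (\<Union>w\<in>W'. open_ball V d w rho)"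
  proof
    fix x assume "x \<in> open_ball V d c (2 ^ Suc k * rho)"
    moreover have "(2::real) ^ Suc k * rho = 2 ^ k * (2 * rho)" by simp
    ultimately have "x \<in> open_ball V d c (2 ^ k * (2 * rho))" by metis
    then obtain w where w: "w \<in> W" "x \<in> open_ball V d w (2 * rho)" using W(4) by blast
    then obtain u where "u \<in> f w" "x \<in> open_ball V d u rho" using f by blast
    then show "x \<in> (\<Union>w\<in>W'. open_ball V d w rho)" unfolding W'_def using w(1) by blast
  qed
  moreover have "W' \<subseteq> V" "finite W'" unfolding W'_def using fV f_fin W(2) by blast+
  ultimately show ?case by blast
qed

lemma doubling_packing:
  assumes met: "metric_on V d" and dbl: "doubling V d lam" and c: "c \<in> V" and rho: "rho > 0"
    and X: "X \<subseteq> open_ball V d c (2 ^ k * rho)"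
    and sep: "\<And>x y. x \<in> X \<Longrightarrow> y \<in> X \<Longrightarrow> x \<noteq> y \<Longrightarrow> 2 * rho \<le> d x y"
  shows "real (card X) \<le> lam ^ k"
proof -
  obtain W where W: "W \<subseteq> V" "finite W" "real (card W) \<le> lam ^ k"
    "open_ball V d c (2 ^ k * rho) \<subseteq> (\<Union>w\<in>W. open_ball V d w rho)"
    using doubling_iterated_cover[OF dbl c rho, where k = k] by blast
  have "\<forall>x\<in>X. \<exists>w. w \<in> W \<and> x \<in> open_ball V d w rho" using X W(4) by blast
  then obtain g where g0: "\<forall>x\<in>X. g x \<in> W \<and> x \<in> open_ball V d (g x) rho"
    by (rule bchoice[elim_format]) blast
  then have g: "\<And>x. x \<in> X \<Longrightarrow> g x \<in> W \<and> x \<in> open_ball V d (g x) rho" by blast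
  \<comment> \<open>two separated points cannot share a covering ball\<close>
  have "inj_on g X"
  proof (rule inj_onI, rule ccontr)
    fix x y assume xy: "x \<in> X" "y \<in> X" "g x = g y" "x \<noteq> y"
    have V: "x \<in> V" "y \<in> V" "g x \<in> V" using g xy W(1) unfolding open_ball_def by auto
    have "d x y \<le> d x (g x) + d y (g x)"
      using metric_on_triangle[OF met V(1) V(3) V(2)] metric_on_sym[OF met V(3) V(2)] by linarith
    also have "\<dots> < 2 * rho" using g[OF xy(1)] g[OF xy(2)] xy(3) unfolding open_ball_def by auto
    finally show False using sep[OF xy(1,2,4)] by linarith
  qed
  then have "card X \<le> card W" using card_inj_on_le[of g X W] g W(2) by blast
  then show ?thesis using W(3) by linarith
qed


definition cluster_family ::
  "'a set \<Rightarrow> ('a \<Rightarrow> 'a \<Rightarrow> real) \<Rightarrow> real \<Rightarrow> real \<Rightarrow> ('a \<times> 'a set) set \<Rightarrow> bool" where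
  "cluster_family V d R delta F \<longleftrightarrow>
     (\<forall>w C. (w, C) \<in> F \<longrightarrow> w \<in> C \<and> C \<subseteq> V \<and> (\<forall>x\<in>C. d x w \<le> R)) \<and>
     (\<forall>w C w' C'. (w, C) \<in> F \<longrightarrow> (w', C') \<in> F \<longrightarrow> w \<noteq> w' \<longrightarrow> C \<inter> C' = {} \<and> delta \<le> d w w') \<and>
     (\<forall>w C C'. (w, C) \<in> F \<longrightarrow> (w, C') \<in> F \<longrightarrow> C = C')"

lemma cluster_familyD:
  assumes "cluster_family V d R delta F"
  shows cluster_family_leader: "(w, C) \<in> F \<Longrightarrow> w \<in> C"
    and cluster_family_subset: "(w, C) \<in> F \<Longrightarrow> C \<subseteq> V"
    and cluster_family_radius: "(w, C) \<in> F \<Longrightarrow> x \<in> C \<Longrightarrow> d x w \<le> R"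
    and cluster_family_disjoint: "(w, C) \<in> F \<Longrightarrow> (w', C') \<in> F \<Longrightarrow> w \<noteq> w' \<Longrightarrow> C \<inter> C' = {}"
    and cluster_family_separated: "(w, C) \<in> F \<Longrightarrow> (w', C') \<in> F \<Longrightarrow> w \<noteq> w' \<Longrightarrow> delta \<le> d w w'"
    and cluster_family_unique: "(w, C) \<in> F \<Longrightarrow> (w, C') \<in> F \<Longrightarrow> C = C'"
  using assms unfolding cluster_family_def by auto

lemma cluster_family_leader_mem:
  assumes "cluster_family V d R delta F" and "(w, C) \<in> F"
  shows "w \<in> V"
  using cluster_family_leader[OF assms] cluster_family_subset[OF assms] by blast

lemma cluster_family_overlap_eq:
  assumes "cluster_family V d R delta F" "(w, C) \<in> F" "(w', C') \<in> F" "C \<inter> C' \<noteq> {}"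
  shows "C = C'"
proof (rule ccontr)
  assume "C \<noteq> C'"
  then have "w \<noteq> w'" using cluster_family_unique[OF assms(1,2)] assms(3) by blast
  then show False using cluster_family_disjoint[OF assms(1-3)] assms(4) by blast
qed

definition merge_clusters :: "('a \<times> 'a set) set \<Rightarrow> ('a \<times> 'a set) list \<Rightarrow> ('a \<times> 'a set) set" where
  "merge_clusters F ps = (\<lambda>(v, P). (v, \<Union>{C. \<exists>w. (w, C) \<in> F \<and> w \<in> P})) ` set ps"

lemma mem_merge_clusters:
  "(v, C') \<in> merge_clusters F ps \<longleftrightarrow> (\<exists>P. (v, P) \<in> set ps \<and> C' = \<Union>{C. \<exists>w. (w, C) \<in> F \<and> w \<in> P})"
  unfolding merge_clusters_def by auto

lemma merge_cluster_family:
  assumes met: "metric_on V d" and F: "cluster_family V d R delta F"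
    and gp: "greedy_partition d eta r (fst ` F) ps" and r: "0 < r"
    and R': "R + r / 2 ^ (eta + 1) \<le> R'"
  shows "cluster_family V d R' (r / 2 ^ (eta + 1)) (merge_clusters F ps)"
proof -
  have leaderV: "v \<in> V" if vP: "(v, P) \<in> set ps" for v P
  proof -
    obtain C where "(v, C) \<in> F" using greedy_partition_part_subset[OF gp vP] by auto
    then show ?thesis using cluster_family_leader_mem[OF F] by blast
  qed
  have leader_in_part: "v \<in> P" if "(v, P) \<in> set ps" for v P
    using greedy_partition_leader_in_part[OF gp that r] metric_on_zero[OF met leaderV[OF that]] .
  have cluster: "v \<in> C' \<and> C' \<subseteq> V \<and> (\<forall>x\<in>C'. d x v \<le> R')"
    if mem: "(v, C') \<in> merge_clusters F ps" for v C'
  proof -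
    obtain P where P: "(v, P) \<in> set ps" and C': "C' = \<Union>{C. \<exists>w. (w, C) \<in> F \<and> w \<in> P}"
      using mem unfolding mem_merge_clusters by blast
    obtain C where "(v, C) \<in> F" using greedy_partition_part_subset[OF gp P] by force
    then have "v \<in> C'" using C' leader_in_part[OF P] cluster_family_leader[OF F] by blast
    moreover have "d x v \<le> R'" if x: "x \<in> C'" for x
    proof -
      obtain w C where wC: "(w, C) \<in> F" "w \<in> P" "x \<in> C" using x C' by blast
      have V: "x \<in> V" "w \<in> V" "v \<in> V"
        using cluster_family_subset[OF F wC(1)] wC(3) cluster_family_leader_mem[OF F wC(1)]
          leaderV[OF P] by blast+
      have "d x v \<le> d x w + d w v" using metric_on_triangle[OF met V] .
      also have "\<dots> < R + r / 2 ^ (eta + 1)"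
        using cluster_family_radius[OF F wC(1,3)] greedy_partition_part_radius[OF gp P wC(2)] by linarith
      finally show ?thesis using R' by linarith
    qed
    ultimately show ?thesis using C' cluster_family_subset[OF F] by blast
  qed
  have apart: "C' \<inter> C'' = {} \<and> r / 2 ^ (eta + 1) \<le> d v v'"
    if mem: "(v, C') \<in> merge_clusters F ps" "(v', C'') \<in> merge_clusters F ps" and ne: "v \<noteq> v'"
    for v C' v' C''
  proof -
    obtain P P' where P: "(v, P) \<in> set ps" "(v', P') \<in> set ps"
      and C: "C' = \<Union>{C. \<exists>w. (w, C) \<in> F \<and> w \<in> P}" "C'' = \<Union>{C. \<exists>w. (w, C) \<in> F \<and> w \<in> P'}"
      using mem unfolding mem_merge_clusters by blast
    have "P \<inter> P' = {}" using greedy_partition_disjoint[OF gp P ne] .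
    then have "C' \<inter> C'' = {}" using C cluster_family_disjoint[OF F] by blast
    moreover have "r / 2 ^ (eta + 1) \<le> d v v'"
      using greedy_partition_leaders_separated[OF gp P ne]
        metric_on_sym[OF met leaderV[OF P(1)] leaderV[OF P(2)]] by linarith
    ultimately show ?thesis ..
  qed
  have unique: "C' = C''"
    if mem: "(v, C') \<in> merge_clusters F ps" "(v, C'') \<in> merge_clusters F ps" for v C' C''
  proof -
    obtain P P' where P: "(v, P) \<in> set ps" "(v, P') \<in> set ps"
      and C: "C' = \<Union>{C. \<exists>w. (w, C) \<in> F \<and> w \<in> P}" "C'' = \<Union>{C. \<exists>w. (w, C) \<in> F \<and> w \<in> P'}"
      using mem unfolding mem_merge_clusters by blast
    have "P = P'"
      using greedy_partition_leaders_unique[OF gp P r metric_on_zero[OF met leaderV[OF P(1)]]] .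
    then show ?thesis using C by simp
  qed
  show ?thesis unfolding cluster_family_def using cluster apart unique by blast
qed

lemma merge_clusters_refines:
  assumes gp: "greedy_partition d eta r (fst ` F) ps" and p: "(w, C) \<in> F"
  shows "\<exists>q\<in>merge_clusters F ps. C \<subseteq> snd q"
proof -
  have "w \<in> fst ` F" using p by force
  then obtain v P where vP: "(v, P) \<in> set ps" "w \<in> P"
    using greedy_partition_covers[OF gp] by blast
  define q where "q = (v, \<Union>{C. \<exists>w. (w, C) \<in> F \<and> w \<in> P})"
  have "q \<in> merge_clusters F ps" unfolding q_def mem_merge_clusters using vP(1) by blast
  moreover have "C \<subseteq> snd q" unfolding q_def using p vP(2) by auto
  ultimately show ?thesis by blast
qed


text \<open>Counting bound for one cluster family: the clusters within distance rho of
  a fixed cluster A have leaders in a ball around the leader of A and are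
  separated, so packing applies.\<close>

lemma cluster_family_near_clusters_bound:
  assumes met: "metric_on V d" and dbl: "doubling V d lam"
    and F: "cluster_family V d R delta F" and delta: "0 < delta" and A: "(a, A) \<in> F"
    and near: "2 * R + rho \<le> 2 ^ k * (delta / 2)"
  shows "real (card {B \<in> snd ` F. \<exists>x\<in>A. \<exists>y\<in>B. d x y < rho}) \<le> lam ^ k"
proof -
  define T where "T = {B \<in> snd ` F. \<exists>x\<in>A. \<exists>y\<in>B. d x y < rho}"
  define ld where "ld B = (SOME v. (v, B) \<in> F)" for B
  have ld: "(ld B, B) \<in> F" if B: "B \<in> T" for B
  proof -
    have "\<exists>v. (v, B) \<in> F" using B unfolding T_def by force
    then show ?thesis unfolding ld_def by (rule someI_ex)
  qed
  \<comment> \<open>a leader determines its cluster, so counting clusters is counting leaders\<close>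
  have "inj_on ld T"
  proof (rule inj_onI)
    fix B B' assume "B \<in> T" "B' \<in> T" "ld B = ld B'"
    then show "B = B'" using cluster_family_unique[OF F] ld by metis
  qed
  then have card_T: "card T = card (ld ` T)" by (simp add: card_image)
  have aV: "a \<in> V" using cluster_family_leader_mem[OF F A] .
  have ball: "ld ` T \<subseteq> open_ball V d a (2 ^ k * (delta / 2))"
  proof
    fix z assume "z \<in> ld ` T"
    then obtain B where B: "B \<in> T" "z = ld B" by blast
    then have zB: "(z, B) \<in> F" using ld by simp
    obtain x y where xy: "x \<in> A" "y \<in> B" "d x y < rho" using B(1) unfolding T_def by blast
    have V: "z \<in> V" "y \<in> V" "x \<in> V"
      using cluster_family_leader_mem[OF F zB] cluster_family_subset[OF F zB] xy(2)
        cluster_family_subset[OF F A] xy(1) by blast+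
    have "d z a \<le> d y z + d x y + d x a"
      using metric_on_triangle[OF met V(1) V(2) aV] metric_on_triangle[OF met V(2) V(3) aV]
        metric_on_sym[OF met V(1) V(2)] metric_on_sym[OF met V(2) V(3)] by linarith
    also have "\<dots> < 2 * R + rho"
      using cluster_family_radius[OF F zB xy(2)] cluster_family_radius[OF F A xy(1)] xy(3) by linarith
    finally show "z \<in> open_ball V d a (2 ^ k * (delta / 2))"
      unfolding open_ball_def using V(1) near by simp
  qed
  have sep: "2 * (delta / 2) \<le> d x y" if xy: "x \<in> ld ` T" "y \<in> ld ` T" and ne: "x \<noteq> y" for x y
  proof -
    obtain B B' where "x = ld B" "y = ld B'" "B \<in> T" "B' \<in> T" using xy by blast
    then have "(x, B) \<in> F" "(y, B') \<in> F" using ld by simp_all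
    then show ?thesis using cluster_family_separated[OF F _ _ ne] by simp
  qed
  have "real (card (ld ` T)) \<le> lam ^ k"
    using doubling_packing[OF met dbl aV _ ball sep] delta by simp
  then show ?thesis using card_T unfolding T_def by simp
qed


lemma tau_ge_one:
  assumes "2 \<le> eta" and "1 + 1 / (2 ^ (eta - 1) - 1) \<le> (tau::real)"
  shows "1 \<le> tau"
proof -
  have "(2::real) ^ 1 \<le> 2 ^ (eta - 1)" using assms(1) by (intro power_increasing) auto
  then have "0 \<le> 1 / (2 ^ (eta - 1) - 1 :: real)" by simp
  then show ?thesis using assms(2) by linarith
qed

lemma tau_step:
  assumes eta: "2 \<le> eta" and tau: "1 + 1 / (2 ^ (eta - 1) - 1) \<le> (tau::real)"
  shows "1 / 2 + tau / 2 ^ eta \<le> tau / 2"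
proof -
  define t :: real where "t = 2 ^ (eta - 1)"
  have "(2::real) ^ 1 \<le> 2 ^ (eta - 1)" using eta by (intro power_increasing) auto
  then have t2: "2 \<le> t" unfolding t_def by simp
  have two_t: "(2::real) ^ eta = 2 * t"
  proof -
    obtain e where "eta = Suc e" using eta by (cases eta) auto
    then show ?thesis unfolding t_def by simp
  qed
  have "(1 + 1 / (t - 1)) * (t - 1) \<le> tau * (t - 1)"
    using tau t2 unfolding t_def[symmetric] by (intro mult_right_mono) auto
  moreover have "(1 + 1 / (t - 1)) * (t - 1) = t" using t2 by (simp add: field_simps)
  ultimately have "t + tau \<le> tau * t" by (simp add: algebra_simps)
  then show ?thesis unfolding two_t using t2 by (simp add: field_simps)
qed

lemma radius_pos: "0 < tau \<Longrightarrow> 0 < r0 \<Longrightarrow> 0 < radius tau r0 j"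
  unfolding radius_def by simp

lemma radius_mono: "1 \<le> tau \<Longrightarrow> 0 \<le> r0 \<Longrightarrow> i \<le> j \<Longrightarrow> radius tau r0 i \<le> radius tau r0 j"
  unfolding radius_def by (intro mult_right_mono power_increasing) auto

lemma radius_step:
  assumes "1 / 2 + tau / 2 ^ eta \<le> tau / 2" and "0 < tau" and "0 < r0"
  shows "radius tau r0 j / 2 + radius tau r0 (Suc j) / 2 ^ eta \<le> radius tau r0 (Suc j) / 2"
proof -
  have "radius tau r0 j * (1 / 2 + tau / 2 ^ eta) \<le> radius tau r0 j * (tau / 2)"
    using assms radius_pos[of tau r0 j] by (intro mult_left_mono) auto
  then show ?thesis unfolding radius_def by (simp add: algebra_simps)
qed

lemma knows_mono:
  "1 \<le> tau \<Longrightarrow> 0 \<le> r0 \<Longrightarrow> i \<le> j \<Longrightarrow> knows d tau r0 A B i \<Longrightarrow> knows d tau r0 A B j"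
  unfolding knows_def using radius_mono[of tau r0 i j] by force


lemma top_level_attained:
  assumes "k \<le> m" and "B \<in> clusters S k"
  shows top_level_le: "top_level S m B \<le> m"
    and top_level_mem: "B \<in> clusters S (top_level S m B)"
  using GreatestI_nat[of "\<lambda>j. j \<le> m \<and> B \<in> clusters S j" k m] assms
  unfolding top_level_def by auto

lemma le_top_level: "j \<le> m \<Longrightarrow> B \<in> clusters S j \<Longrightarrow> j \<le> top_level S m B"
  unfolding top_level_def by (rule Greatest_le_nat[of "\<lambda>j. j \<le> m \<and> B \<in> clusters S j" j m]) auto


context
  fixes V :: "'a set" and d :: "'a \<Rightarrow> 'a \<Rightarrow> real" and eta :: nat and tau r0 :: real
    and S :: "nat \<Rightarrow> ('a \<times> 'a set) set" and m :: nat
  assumes met: "metric_on V d"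
    and eta: "2 \<le> eta"
    and tau: "1 + 1 / (2 ^ (eta - 1) - 1) \<le> tau"
    and r0: "0 < r0" and r0_sep: "\<forall>u\<in>V. \<forall>v\<in>V. u \<noteq> v \<longrightarrow> r0 < d u v"
    and hier: "hierarchy V d eta tau r0 S m"
begin

lemma hierarchy_step:
  "j < m \<Longrightarrow> \<exists>ps. greedy_partition d eta (2 * radius tau r0 (Suc j)) (fst ` S j) ps \<and>
                  S (Suc j) = merge_clusters (S j) ps"
  using hier unfolding hierarchy_def merge_clusters_def by blast

lemma hierarchy_finite: "j \<le> m \<Longrightarrow> finite (S j)"
proof -
  assume "j \<le> m"
  then have "0 < card (S j)"
    using hier unfolding hierarchy_def by (cases "j = m") (auto dest: le_neq_implies_less)
  then show ?thesis using card_gt_0_iff by blast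
qed

lemma hierarchy_cluster_family:
  "j \<le> m \<Longrightarrow> cluster_family V d (radius tau r0 j / 2) (radius tau r0 j / 2 ^ eta) (S j)"
proof (induction j)
  case 0
  have S0: "S 0 = (\<lambda>v. (v, {v})) ` V" using hier unfolding hierarchy_def by blast
  have "r0 / 2 ^ eta \<le> r0" using r0 by (simp add: divide_le_eq_1 field_simps)
  then have "r0 / 2 ^ eta \<le> d v v'" if "v \<in> V" "v' \<in> V" "v \<noteq> v'" for v v'
    using r0_sep that by force
  then show ?case
    using r0 metric_on_zero[OF met] unfolding cluster_family_def S0 radius_def by auto
next
  case (Suc j)
  obtain ps where gp: "greedy_partition d eta (2 * radius tau r0 (Suc j)) (fst ` S j) ps"
    and step: "S (Suc j) = merge_clusters (S j) ps"
    using hierarchy_step[of j] Suc.prems by (auto simp: Suc_le_eq)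
  have IH: "cluster_family V d (radius tau r0 j / 2) (radius tau r0 j / 2 ^ eta) (S j)"
    using Suc by simp
  have tau_pos: "0 < tau" using tau_ge_one[OF eta tau] by simp
  have r: "0 < 2 * radius tau r0 (Suc j)" using radius_pos[OF tau_pos r0] by simp
  have half: "2 * radius tau r0 (Suc j) / 2 ^ (eta + 1) = radius tau r0 (Suc j) / 2 ^ eta" by simp
  show ?case
    using merge_cluster_family[OF met IH gp r] radius_step[OF tau_step[OF eta tau] tau_pos r0, of j]
    unfolding step half by simp
qed

lemma hierarchy_refines: "j \<le> i \<Longrightarrow> i \<le> m \<Longrightarrow> p \<in> S j \<Longrightarrow> \<exists>q\<in>S i. snd p \<subseteq> snd q"
proof (induction i)
  case (Suc i)
  show ?case
  proof (cases "j = Suc i")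
    case False
    then obtain q where q: "q \<in> S i" "snd p \<subseteq> snd q" using Suc by auto
    obtain ps where gp: "greedy_partition d eta (2 * radius tau r0 (Suc i)) (fst ` S i) ps"
      and step: "S (Suc i) = merge_clusters (S i) ps"
      using hierarchy_step[of i] Suc.prems by (auto simp: Suc_le_eq)
    obtain q' where "q' \<in> S (Suc i)" "snd q \<subseteq> snd q'"
      using merge_clusters_refines[OF gp, of "fst q" "snd q"] q(1) unfolding step by auto
    then show ?thesis using q(2) by blast
  qed (use Suc in blast)
qed auto

lemma hierarchy_contiguous:
  assumes ji: "j \<le> i" and ik: "i \<le> k" and km: "k \<le> m"
    and Bj: "B \<in> clusters S j" and Bk: "B \<in> clusters S k"
  shows "B \<in> clusters S i"
proof -
  obtain w where w: "(w, B) \<in> S j" using Bj unfolding clusters_def by auto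
  obtain q where q: "q \<in> S i" "B \<subseteq> snd q" using hierarchy_refines[OF ji _ w] ik km by force
  obtain q' where q': "q' \<in> S k" "snd q \<subseteq> snd q'" using hierarchy_refines[OF ik km q(1)] by blast
  obtain b where b: "(b, B) \<in> S k" using Bk unfolding clusters_def by auto
  have "w \<in> B" using cluster_family_leader[OF hierarchy_cluster_family w] ji ik km by simp
  then have "B = snd q'"
    using cluster_family_overlap_eq[OF hierarchy_cluster_family[OF km] b, of "fst q'" "snd q'"] q q'
    by auto
  then have "snd q = B" using q q' by blast
  then show ?thesis using q unfolding clusters_def by blast
qed

lemma responsible_pair_at_top_level:
  assumes j: "j \<le> m" and A: "A \<in> clusters S j" and B: "B \<in> clusters S j"
    and knows: "knows d tau r0 A B j" and resp: "top_level S m A \<le> top_level S m B"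
  shows "B \<in> clusters S (top_level S m A) \<and> knows d tau r0 A B (top_level S m A)"
proof -
  have ja: "j \<le> top_level S m A" using le_top_level[OF j A] .
  have "B \<in> clusters S (top_level S m A)"
    using hierarchy_contiguous[OF ja resp top_level_le[OF j B] B top_level_mem[OF j B]] .
  moreover have "knows d tau r0 A B (top_level S m A)"
    using knows_mono[OF tau_ge_one[OF eta tau] _ ja knows] r0 by simp
  ultimately show ?thesis ..
qed

end


theorem lemma7:
  fixes V :: "'a set" and d :: "'a \<Rightarrow> 'a \<Rightarrow> real" and lam :: real
    and eta :: nat and tau r0 :: real
    and S :: "nat \<Rightarrow> ('a \<times> 'a set) set" and m :: nat and A :: "'a set" and j0 :: nat
  assumes "finite V" and "card V \<ge> 2"
    and "metric_on V d"
    and "doubling V d lam"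
    and "eta \<ge> 2"
    and "1 + 1 / (2 ^ (eta - 1) - 1) \<le> tau" and "tau \<le> 2 ^ eta"
    and "0 < r0" and "\<forall>u\<in>V. \<forall>v\<in>V. u \<noteq> v \<longrightarrow> r0 < d u v"
    and "hierarchy V d eta tau r0 S m"
    and "j0 \<le> m" and "A \<in> clusters S j0"
  shows "real (card {B. B \<noteq> A \<and>
                      (\<exists>j\<le>m. A \<in> clusters S j \<and> B \<in> clusters S j \<and> knows d tau r0 A B j) \<and>
                      top_level S m A \<le> top_level S m B})
         \<le> lam ^ (3 + eta)"
proof -
  note hier = assms(3,5,6,8,9,10)
  define a where "a = top_level S m A"
  have am: "a \<le> m" and "A \<in> clusters S a"
    using top_level_attained[OF assms(11,12)] unfolding a_def by auto
  then obtain w where wA: "(w, A) \<in> S a" unfolding clusters_def by auto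
  note level_a = hierarchy_cluster_family[OF hier am]
  define T where "T = {B \<in> clusters S a. knows d tau r0 A B a}"
  have "finite T" using hierarchy_finite[OF hier am] unfolding T_def clusters_def by simp
  moreover have "{B. B \<noteq> A \<and> (\<exists>j\<le>m. A \<in> clusters S j \<and> B \<in> clusters S j \<and> knows d tau r0 A B j) \<and>
                     top_level S m A \<le> top_level S m B} \<subseteq> T"
    using responsible_pair_at_top_level[OF hier] unfolding T_def a_def by blast
  ultimately have "real (card {B. B \<noteq> A \<and> (\<exists>j\<le>m. A \<in> clusters S j \<and> B \<in> clusters S j \<and>
                     knows d tau r0 A B j) \<and> top_level S m A \<le> top_level S m B}) \<le> real (card T)"
    by (simp add: card_mono)
  also have "real (card T) \<le> lam ^ (eta + 2)"
  proof -
    \<comment> \<open>radius r_a/2, separation r_a/2^eta, distance r_a: leaders lie in a ball of radius 2 r_a\<close>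
    have r: "0 < radius tau r0 a" using radius_pos tau_ge_one[OF assms(5,6)] assms(8) by simp
    have "2 * (radius tau r0 a / 2) + radius tau r0 a \<le> 2 ^ (eta + 2) * (radius tau r0 a / 2 ^ eta / 2)"
      by (simp add: power_add)
    from cluster_family_near_clusters_bound[OF assms(3,4) level_a _ wA this]
    show ?thesis using r unfolding T_def knows_def clusters_def by simp
  qed
  also have "\<dots> \<le> lam ^ (3 + eta)"
    using doubling_ge_one[OF assms(3,4) cluster_family_leader_mem[OF level_a wA]]
    by (intro power_increasing) auto
  finally show ?thesis .
qed

end
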